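(* Let $\underline{\mathrm{set}}$ be the category of finite sets. Then its Grothendieck heap $\mathrm{K}_0^{\mathrm{heap}}(\underline{\mathrm{set}})$ is isomorphic to the heap associated with $(\mathbb{Z},+)$, i.e. $\mathbb{Z}$ with $[a,b,c]=a-b+c$, via $\overline{A}\mapsto |A|$; moreover, the truss structure induced by the cartesian product, $\overline{A}\,\overline{B}=\overline{A\times B}$, coincides with the truss associated with the ring $(\mathbb{Z},+,\cdot)$.
   Context: A heap is a set $H$ with a ternary operation $[\_,\_,\_]:H^3\to H$ satisfying $[a,b,[c,d,e]]=[[a,b,c],d,e]$ and $[x,x,y]=y=[y,x,x]$; a truss is a heap with a multiplication satisfying $[wx,wy,wz]=w[x,y,z]$ and $[xw,yw,zw]=[x,y,z]w$. The truss associated with a ring $R$ is $R$ with $[a,b,c]=a-b+c$ and the ring multiplication. For an essentially small category $\mathcal{C}$, its Grothendieck heap $\mathrm{K}_0^{\mathrm{heap}}(\mathcal{C})$ is the heap generated by the isomorphism classes $\overline{X}$ of objects of $\mathcal{C}$, subject to the relations $[\overline{X},\overline{Y},\overline{Z}]=\overline{X\sqcup_Y Z}$ for every pushout square $X\leftarrow Y\rightarrow Z$ in $\mathcal{C}$ in which at least one of the two maps $Y\to X$, $Y\to Z$ is a monomorphism. *)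

theory Defs
  imports Main "HOL-Library.FuncSet"
begin

definition heap :: "'a set \<Rightarrow> ('a \<Rightarrow> 'a \<Rightarrow> 'a \<Rightarrow> 'a) \<Rightarrow> bool" where
  "heap H t \<longleftrightarrow>
     (\<forall>a\<in>H. \<forall>b\<in>H. \<forall>c\<in>H. t a b c \<in> H) \<and>
     (\<forall>a\<in>H. \<forall>b\<in>H. \<forall>c\<in>H. \<forall>d\<in>H. \<forall>e\<in>H. t a b (t c d e) = t (t a b c) d e) \<and>
     (\<forall>x\<in>H. \<forall>y\<in>H. t x x y = y \<and> t y x x = y)"

definition truss :: "'a set \<Rightarrow> ('a \<Rightarrow> 'a \<Rightarrow> 'a \<Rightarrow> 'a) \<Rightarrow> ('a \<Rightarrow> 'a \<Rightarrow> 'a) \<Rightarrow> bool" where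
  "truss H t m \<longleftrightarrow> heap H t \<and>
     (\<forall>a\<in>H. \<forall>b\<in>H. m a b \<in> H) \<and>
     (\<forall>a\<in>H. \<forall>b\<in>H. \<forall>c\<in>H. m (m a b) c = m a (m b c)) \<and>
     (\<forall>w\<in>H. \<forall>x\<in>H. \<forall>y\<in>H. \<forall>z\<in>H.
        t (m w x) (m w y) (m w z) = m w (t x y z) \<and>
        t (m x w) (m y w) (m z w) = m (t x y z) w)"

text \<open>Objects: finite sets of natural numbers (an essentially small model of the
  category of finite sets); morphisms A \<rightarrow> B: functions mapping A into B,
  considered up to their values on A.\<close>

definition fs_iso :: "nat set \<Rightarrow> nat set \<Rightarrow> bool" where
  "fs_iso A B \<longleftrightarrow> (\<exists>f g. f \<in> A \<rightarrow> B \<and> g \<in> B \<rightarrow> A \<and>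
      (\<forall>a\<in>A. g (f a) = a) \<and> (\<forall>b\<in>B. f (g b) = b))"

definition fs_mono :: "(nat \<Rightarrow> nat) \<Rightarrow> nat set \<Rightarrow> nat set \<Rightarrow> bool" where
  "fs_mono f Y X \<longleftrightarrow> f \<in> Y \<rightarrow> X \<and>
     (\<forall>W::nat set. finite W \<longrightarrow> (\<forall>a\<in>W \<rightarrow> Y. \<forall>b\<in>W \<rightarrow> Y.
        (\<forall>w\<in>W. f (a w) = f (b w)) \<longrightarrow> (\<forall>w\<in>W. a w = b w)))"

definition fs_pushout ::
  "nat set \<Rightarrow> nat set \<Rightarrow> nat set \<Rightarrow> nat set \<Rightarrow>
   (nat \<Rightarrow> nat) \<Rightarrow> (nat \<Rightarrow> nat) \<Rightarrow> (nat \<Rightarrow> nat) \<Rightarrow> (nat \<Rightarrow> nat) \<Rightarrow> bool" where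
  "fs_pushout X Y Z P f g i j \<longleftrightarrow>
     finite X \<and> finite Y \<and> finite Z \<and> finite P \<and>
     f \<in> Y \<rightarrow> X \<and> g \<in> Y \<rightarrow> Z \<and> i \<in> X \<rightarrow> P \<and> j \<in> Z \<rightarrow> P \<and>
     (\<forall>y\<in>Y. i (f y) = j (g y)) \<and>
     (\<forall>W::nat set. finite W \<longrightarrow> (\<forall>a\<in>X \<rightarrow> W. \<forall>b\<in>Z \<rightarrow> W.
        (\<forall>y\<in>Y. a (f y) = b (g y)) \<longrightarrow>
        (\<exists>u\<in>P \<rightarrow> W. (\<forall>x\<in>X. u (i x) = a x) \<and> (\<forall>z\<in>Z. u (j z) = b z) \<and>
           (\<forall>u'\<in>P \<rightarrow> W. (\<forall>x\<in>X. u' (i x) = a x) \<and> (\<forall>z\<in>Z. u' (j z) = b z)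
               \<longrightarrow> (\<forall>p\<in>P. u' p = u p)))))"

datatype 'g hterm = Gen 'g | Tri "'g hterm" "'g hterm" "'g hterm"

primrec gens :: "'g hterm \<Rightarrow> 'g set" where
  "gens (Gen A) = {A}"
| "gens (Tri a b c) = gens a \<union> gens b \<union> gens c"

definition wf_terms :: "nat set hterm set" where
  "wf_terms = {t. \<forall>A\<in>gens t. finite A}"

inductive_set gh_rel :: "(nat set hterm \<times> nat set hterm) set" where
  refl: "a \<in> wf_terms \<Longrightarrow> (a, a) \<in> gh_rel"
| sym: "(a, b) \<in> gh_rel \<Longrightarrow> (b, a) \<in> gh_rel"
| trans: "(a, b) \<in> gh_rel \<Longrightarrow> (b, c) \<in> gh_rel \<Longrightarrow> (a, c) \<in> gh_rel"
| cong: "(a, a') \<in> gh_rel \<Longrightarrow> (b, b') \<in> gh_rel \<Longrightarrow> (c, c') \<in> gh_rel \<Longrightarrow>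
         (Tri a b c, Tri a' b' c') \<in> gh_rel"
| assoc: "a \<in> wf_terms \<Longrightarrow> b \<in> wf_terms \<Longrightarrow> c \<in> wf_terms \<Longrightarrow> d \<in> wf_terms \<Longrightarrow>
          e \<in> wf_terms \<Longrightarrow> (Tri a b (Tri c d e), Tri (Tri a b c) d e) \<in> gh_rel"
| malcev1: "x \<in> wf_terms \<Longrightarrow> y \<in> wf_terms \<Longrightarrow> (Tri x x y, y) \<in> gh_rel"
| malcev2: "x \<in> wf_terms \<Longrightarrow> y \<in> wf_terms \<Longrightarrow> (Tri y x x, y) \<in> gh_rel"
| iso: "finite A \<Longrightarrow> finite B \<Longrightarrow> fs_iso A B \<Longrightarrow> (Gen A, Gen B) \<in> gh_rel"
| pushout: "fs_pushout X Y Z P f1 g1 i1 j1 \<Longrightarrow> fs_mono f1 Y X \<or> fs_mono g1 Y Z \<Longrightarrow>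
            (Tri (Gen X) (Gen Y) (Gen Z), Gen P) \<in> gh_rel"

definition K0 :: "nat set hterm set set" where
  "K0 = wf_terms // gh_rel"

definition K0_op :: "nat set hterm set \<Rightarrow> nat set hterm set \<Rightarrow> nat set hterm set \<Rightarrow> nat set hterm set" where
  "K0_op x y z = gh_rel `` {Tri (SOME a. a \<in> x) (SOME b. b \<in> y) (SOME c. c \<in> z)}"

definition K0_cl :: "nat set \<Rightarrow> nat set hterm set" where
  "K0_cl A = gh_rel `` {Gen A}"

end

theory Submission
  imports Defs "HOL-Algebra.Group"
begin

text \<open>
  Cardinality is invariant under isomorphism, and a pushout P of finite sets X <- Y -> Z along a
  monomorphism satisfies |P| = |X| - |Y| + |Z|; hence the cardinality of heap terms descends to
  a heap morphism from the Grothendieck heap to \<int>. Conversely, any element e of a heap is the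
  unit of a group with x y = [x, e, y]; taking for e the class of the empty set, the pushout of
  {0..<k} and {k} over the empty set shows that the class of a k-element set is the k-th power of the class of a singleton. So every
  class is the power of that generator given by its cardinality, and the cardinality map is
  bijective. The multiplication transported from \<int> is a truss structure extending the
  cartesian product, and it is the only one: distributivity over the heap operation together
  with -n = [0, n, 0] reduces any truss product to products of classes of finite sets.
\<close>

section \<open>The retract group of a heap\<close>

definition heap_retract :: "'a set \<Rightarrow> ('a \<Rightarrow> 'a \<Rightarrow> 'a \<Rightarrow> 'a) \<Rightarrow> 'a \<Rightarrow> 'a monoid" where
  "heap_retract H t e = \<lparr>carrier = H, mult = (\<lambda>x y. t x e y), one = e\<rparr>"

context
  fixes H and t :: "'a \<Rightarrow> 'a \<Rightarrow> 'a \<Rightarrow> 'a" and e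
  assumes heap: "heap H t" and e: "e \<in> H"
begin

private lemma heap_closed: "a \<in> H \<Longrightarrow> b \<in> H \<Longrightarrow> c \<in> H \<Longrightarrow> t a b c \<in> H"
  and heap_assoc: "a \<in> H \<Longrightarrow> b \<in> H \<Longrightarrow> c \<in> H \<Longrightarrow> d \<in> H \<Longrightarrow> f \<in> H \<Longrightarrow>
    t a b (t c d f) = t (t a b c) d f"
  and heap_left: "x \<in> H \<Longrightarrow> y \<in> H \<Longrightarrow> t x x y = y"
  and heap_right: "x \<in> H \<Longrightarrow> y \<in> H \<Longrightarrow> t y x x = y"
  using heap unfolding heap_def by blast+

private lemma heap_left_inverse: "x \<in> H \<Longrightarrow> t (t e x e) e x = e"
  using heap_assoc[of e x e e x] heap_left heap_right e by simp

lemma heap_retract_group: "group (heap_retract H t e)"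
proof (rule groupI)
  show "\<exists>y\<in>carrier (heap_retract H t e). y \<otimes>\<^bsub>heap_retract H t e\<^esub> x = \<one>\<^bsub>heap_retract H t e\<^esub>"
    if "x \<in> carrier (heap_retract H t e)" for x
    using that e heap_left_inverse heap_closed
    by (auto simp: heap_retract_def intro!: bexI[of _ "t e x e"])
qed (use e heap_closed heap_assoc heap_left in \<open>auto simp: heap_retract_def\<close>)

lemma heap_retract_inv: "y \<in> H \<Longrightarrow> inv\<^bsub>heap_retract H t e\<^esub> y = t e y e"
  by (rule group.inv_equality[OF heap_retract_group])
    (use e heap_closed heap_left_inverse in \<open>auto simp: heap_retract_def\<close>)

lemma heap_op_via_retract:
  assumes "x \<in> H" "y \<in> H" "z \<in> H"
  shows "t x y z = x \<otimes>\<^bsub>heap_retract H t e\<^esub> inv\<^bsub>heap_retract H t e\<^esub> y \<otimes>\<^bsub>heap_retract H t e\<^esub> z"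
proof -
  have "t (t x e (t e y e)) e z = t (t (t x e e) y e) e z"
    using assms e heap_assoc[of x e e y e] by simp
  also have "\<dots> = t x y (t e e z)"
    using assms e heap_right heap_assoc[of x y e e z] by simp
  finally show ?thesis
    using assms e heap_left heap_retract_inv by (simp add: heap_retract_def)
qed

end

section \<open>Truss multiplications on a heap isomorphic to a ring\<close>

lemma truss_transfer:
  fixes \<phi> :: "'a \<Rightarrow> 'b::ring" and \<psi> :: "'b \<Rightarrow> 'a"
  assumes "heap H t" and \<psi>_in: "\<And>n. \<psi> n \<in> H"
    and \<psi>_\<phi>: "\<And>x. x \<in> H \<Longrightarrow> \<psi> (\<phi> x) = x" and \<phi>_\<psi>: "\<And>n. \<phi> (\<psi> n) = n"
    and \<psi>_hom: "\<And>p q r. t (\<psi> p) (\<psi> q) (\<psi> r) = \<psi> (p - q + r)"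
  shows "truss H t (\<lambda>x y. \<psi> (\<phi> x * \<phi> y))"
proof -
  have t_\<phi>: "t x y z = \<psi> (\<phi> x - \<phi> y + \<phi> z)" if "x \<in> H" "y \<in> H" "z \<in> H" for x y z
    using \<psi>_hom[of "\<phi> x" "\<phi> y" "\<phi> z"] that by (simp add: \<psi>_\<phi>)
  show ?thesis
    unfolding truss_def
    using assms(1) by (simp add: \<psi>_in \<phi>_\<psi> \<psi>_hom t_\<phi> mult.assoc algebra_simps)
qed

lemma truss_mult_determined_by_nonneg:
  fixes \<psi> :: "int \<Rightarrow> 'a"
  assumes tr: "truss H t m" and \<psi>_in: "\<And>n. \<psi> n \<in> H"
    and \<psi>_hom: "\<And>p q r. t (\<psi> p) (\<psi> q) (\<psi> r) = \<psi> (p - q + r)"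
    and nonneg: "\<And>a b. 0 \<le> a \<Longrightarrow> 0 \<le> b \<Longrightarrow> m (\<psi> a) (\<psi> b) = \<psi> (a * b)"
  shows "m (\<psi> a) (\<psi> b) = \<psi> (a * b)"
proof -
  have left: "\<And>w x y z. w \<in> H \<Longrightarrow> x \<in> H \<Longrightarrow> y \<in> H \<Longrightarrow> z \<in> H \<Longrightarrow>
      m w (t x y z) = t (m w x) (m w y) (m w z)"
    and right: "\<And>w x y z. w \<in> H \<Longrightarrow> x \<in> H \<Longrightarrow> y \<in> H \<Longrightarrow> z \<in> H \<Longrightarrow>
      m (t x y z) w = t (m x w) (m y w) (m z w)"
    using tr unfolding truss_def by auto
  have neg: "\<psi> (- n) = t (\<psi> 0) (\<psi> n) (\<psi> 0)" for n
    using \<psi>_hom[of 0 n 0] by simp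
  have nonneg_left: "m (\<psi> a) (\<psi> b) = \<psi> (a * b)" if "0 \<le> a" for a b
  proof (cases "0 \<le> b")
    case False
    have "m (\<psi> a) (\<psi> b) = m (\<psi> a) (t (\<psi> 0) (\<psi> (- b)) (\<psi> 0))"
      using neg[of "- b"] by simp
    also have "\<dots> = t (m (\<psi> a) (\<psi> 0)) (m (\<psi> a) (\<psi> (- b))) (m (\<psi> a) (\<psi> 0))"
      by (rule left) (rule \<psi>_in)+
    also have "\<dots> = \<psi> (a * b)"
      using that False by (simp add: nonneg \<psi>_hom)
    finally show ?thesis .
  qed (use that nonneg in simp)
  show ?thesis
  proof (cases "0 \<le> a")
    case False
    have "m (\<psi> a) (\<psi> b) = m (t (\<psi> 0) (\<psi> (- a)) (\<psi> 0)) (\<psi> b)"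
      using neg[of "- a"] by simp
    also have "\<dots> = t (m (\<psi> 0) (\<psi> b)) (m (\<psi> (- a)) (\<psi> b)) (m (\<psi> 0) (\<psi> b))"
      by (rule right) (rule \<psi>_in)+
    also have "\<dots> = \<psi> (a * b)"
      using False by (simp add: nonneg_left \<psi>_hom)
    finally show ?thesis .
  qed (use nonneg_left in simp)
qed

section \<open>Pushouts of finite sets\<close>

lemma fs_iso_imp_card_eq: "fs_iso A B \<Longrightarrow> card A = card B"
proof -
  assume "fs_iso A B"
  then obtain f g where "f \<in> A \<rightarrow> B" "g \<in> B \<rightarrow> A" "\<forall>a\<in>A. g (f a) = a" "\<forall>b\<in>B. f (g b) = b"
    unfolding fs_iso_def by blast
  then have "bij_betw f A B" by (intro bij_betw_byWitness[where f'=g]) auto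
  then show ?thesis by (rule bij_betw_same_card)
qed

lemma bij_betw_imp_fs_iso: "bij_betw f A B \<Longrightarrow> fs_iso A B"
  unfolding fs_iso_def
  by (intro exI[of _ f] exI[of _ "inv_into A f"])
    (auto simp: bij_betw_def inv_into_f_f f_inv_into_f inv_into_into)

lemma fs_mono_imp_inj_on:
  assumes "fs_mono f Y X" shows "inj_on f Y"
proof (rule inj_onI)
  fix y1 y2 assume y: "y1 \<in> Y" "y2 \<in> Y" "f y1 = f y2"
  have "\<forall>a\<in>{0::nat} \<rightarrow> Y. \<forall>b\<in>{0} \<rightarrow> Y. (\<forall>w\<in>{0}. f (a w) = f (b w)) \<longrightarrow> (\<forall>w\<in>{0}. a w = b w)"
    using assms unfolding fs_mono_def by blast
  from this[rule_format, of "\<lambda>_. y1" "\<lambda>_. y2"] y show "y1 = y2" by auto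
qed

lemma fs_pushoutD:
  assumes "fs_pushout X Y Z P f g i j"
  shows "finite X" "finite Y" "finite Z" "finite P"
    and "f \<in> Y \<rightarrow> X" "g \<in> Y \<rightarrow> Z" "i \<in> X \<rightarrow> P" "j \<in> Z \<rightarrow> P"
    and "\<And>y. y \<in> Y \<Longrightarrow> i (f y) = j (g y)"
  using assms by (simp_all add: fs_pushout_def)

lemma fs_pushout_universal:
  fixes W :: "nat set"
  assumes po: "fs_pushout X Y Z P f g i j" and "finite W" "a \<in> X \<rightarrow> W" "b \<in> Z \<rightarrow> W"
    and "\<And>y. y \<in> Y \<Longrightarrow> a (f y) = b (g y)"
  shows "\<exists>u\<in>P \<rightarrow> W. (\<forall>x\<in>X. u (i x) = a x) \<and> (\<forall>z\<in>Z. u (j z) = b z) \<and>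
           (\<forall>u'\<in>P \<rightarrow> W. (\<forall>x\<in>X. u' (i x) = a x) \<and> (\<forall>z\<in>Z. u' (j z) = b z)
               \<longrightarrow> (\<forall>p\<in>P. u' p = u p))"
proof -
  have "\<forall>W::nat set. finite W \<longrightarrow> (\<forall>a\<in>X \<rightarrow> W. \<forall>b\<in>Z \<rightarrow> W.
        (\<forall>y\<in>Y. a (f y) = b (g y)) \<longrightarrow>
        (\<exists>u\<in>P \<rightarrow> W. (\<forall>x\<in>X. u (i x) = a x) \<and> (\<forall>z\<in>Z. u (j z) = b z) \<and>
           (\<forall>u'\<in>P \<rightarrow> W. (\<forall>x\<in>X. u' (i x) = a x) \<and> (\<forall>z\<in>Z. u' (j z) = b z)
               \<longrightarrow> (\<forall>p\<in>P. u' p = u p))))"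
    using po unfolding fs_pushout_def by (elim conjE) assumption
  from this[rule_format, OF assms(2-5)] show ?thesis .
qed

lemma fs_pushout_commute:
  assumes po: "fs_pushout X Y Z P f g i j"
  shows "fs_pushout Z Y X P g f j i"
  unfolding fs_pushout_def
proof (intro conjI allI impI ballI)
  fix W :: "nat set" and a b
  assume W: "finite W" and a: "a \<in> Z \<rightarrow> W" and b: "b \<in> X \<rightarrow> W"
    and "\<forall>y\<in>Y. a (g y) = b (f y)"
  then have "\<And>y. y \<in> Y \<Longrightarrow> b (f y) = a (g y)" by simp
  from fs_pushout_universal[OF po W b a this] show "\<exists>u\<in>P \<rightarrow> W. (\<forall>z\<in>Z. u (j z) = a z) \<and> (\<forall>x\<in>X. u (i x) = b x) \<and>
      (\<forall>u'\<in>P \<rightarrow> W. (\<forall>z\<in>Z. u' (j z) = a z) \<and> (\<forall>x\<in>X. u' (i x) = b x) \<longrightarrow> (\<forall>p\<in>P. u' p = u p))"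
    by blast
qed (use fs_pushoutD[OF po] in auto)

lemma fs_pushout_induced_map:
  fixes W :: "nat set"
  assumes "fs_pushout X Y Z P f g i j" "finite W" "a \<in> X \<rightarrow> W" "b \<in> Z \<rightarrow> W"
    and "\<And>y. y \<in> Y \<Longrightarrow> a (f y) = b (g y)"
  obtains u where "\<forall>x\<in>X. u (i x) = a x" "\<forall>z\<in>Z. u (j z) = b z"
  using fs_pushout_universal[OF assms] by blast

lemma fs_pushout_maps_eq:
  fixes W :: "nat set"
  assumes po: "fs_pushout X Y Z P f g i j" and W: "finite W"
    and u: "u \<in> P \<rightarrow> W" "u' \<in> P \<rightarrow> W"
    and "\<forall>x\<in>X. u (i x) = u' (i x)" "\<forall>z\<in>Z. u (j z) = u' (j z)"
    and "p \<in> P"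
  shows "u p = u' p"
proof -
  have "(\<lambda>x. u (i x)) \<in> X \<rightarrow> W" "(\<lambda>z. u (j z)) \<in> Z \<rightarrow> W"
    using u(1) fs_pushoutD(7,8)[OF po] by auto
  moreover have "\<And>y. y \<in> Y \<Longrightarrow> u (i (f y)) = u (j (g y))" using fs_pushoutD(9)[OF po] by simp
  ultimately obtain v where "\<forall>w\<in>P \<rightarrow> W. (\<forall>x\<in>X. w (i x) = u (i x)) \<and> (\<forall>z\<in>Z. w (j z) = u (j z))
      \<longrightarrow> (\<forall>p\<in>P. w p = v p)"
    using fs_pushout_universal[OF po W] by blast
  then show ?thesis using u assms(5-7) by (metis (no_types, lifting))
qed

lemma fs_pushout_jointly_surjective:
  assumes po: "fs_pushout X Y Z P f g i j"
  shows "P \<subseteq> i ` X \<union> j ` Z"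
proof
  fix p assume p: "p \<in> P"
  have "(\<lambda>q. if q \<in> i ` X \<union> j ` Z then 0::nat else 1) p = (\<lambda>_. 0) p"
    by (rule fs_pushout_maps_eq[OF po, of "{0, 1}"]) (use p in auto)
  then show "p \<in> i ` X \<union> j ` Z" by (auto split: if_splits)
qed

lemma fs_pushout_inj_on_right:
  assumes po: "fs_pushout X Y Z P f g i j" and inj: "inj_on f Y"
  shows "inj_on j Z"
proof (rule inj_onI, rule ccontr)
  fix z1 z2 assume z: "z1 \<in> Z" "z2 \<in> Z" "j z1 = j z2" "z1 \<noteq> z2"
  define b where "b z = (if z = z1 then 1::nat else 0)" for z
  \<comment> \<open>since f is injective, the indicator b of z1 is compatible with a map a on X\<close>
  define a where "a x = (if x \<in> f ` Y \<and> g (the_inv_into Y f x) = z1 then 1::nat else 0)" for x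
  have comm: "\<And>y. y \<in> Y \<Longrightarrow> a (f y) = b (g y)"
    using inj by (auto simp: a_def b_def the_inv_into_f_f)
  obtain u where "\<forall>x\<in>X. u (i x) = a x" "\<forall>z\<in>Z. u (j z) = b z"
    by (rule fs_pushout_induced_map[OF po, where W="{0, 1}" and a=a and b=b])
      (auto simp: comm, auto simp: a_def b_def split: if_splits)
  then have "u (j z1) = 1" "u (j z2) = 0" using z(1,2,4) by (simp_all add: b_def)
  then show False using z(3) by simp
qed

lemma fs_pushout_outside_image:
  assumes po: "fs_pushout X Y Z P f g i j" and x: "x \<in> X - f ` Y"
  shows "\<And>z. z \<in> Z \<Longrightarrow> j z \<noteq> i x" and "\<And>x'. x' \<in> X \<Longrightarrow> i x' = i x \<Longrightarrow> x' = x"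
proof -
  define a where "a x' = (if x' = x then 1::nat else 0)" for x'
  have comm: "\<And>y. y \<in> Y \<Longrightarrow> a (f y) = (\<lambda>_. 0) (g y)" using x by (auto simp: a_def)
  obtain u where u: "\<forall>x'\<in>X. u (i x') = a x'" "\<forall>z\<in>Z. u (j z) = 0"
    by (rule fs_pushout_induced_map[OF po, where W="{0, 1}" and a=a and b="\<lambda>_. 0"])
      (auto simp: comm, auto simp: a_def split: if_splits)
  then have "u (i x) = 1" using x by (simp add: a_def)
  then show "\<And>z. z \<in> Z \<Longrightarrow> j z \<noteq> i x" and "\<And>x'. x' \<in> X \<Longrightarrow> i x' = i x \<Longrightarrow> x' = x"
    using u by (auto simp: a_def split: if_splits)
qed

lemma fs_pushout_card:
  assumes po: "fs_pushout X Y Z P f g i j" and inj: "inj_on f Y"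
  shows "card P + card Y = card X + card Z"
proof -
  note fs = fs_pushoutD[OF po]
  have "P \<subseteq> j ` Z \<union> i ` (X - f ` Y)"
  proof
    fix p assume "p \<in> P"
    then consider x where "x \<in> X" "p = i x" | "p \<in> j ` Z"
      using fs_pushout_jointly_surjective[OF po] by blast
    then show "p \<in> j ` Z \<union> i ` (X - f ` Y)"
    proof cases
      case (1 x)
      then show ?thesis using fs(6,9) by (cases "x \<in> f ` Y") auto
    qed simp
  qed
  then have P: "P = j ` Z \<union> i ` (X - f ` Y)" using fs by auto
  have "j ` Z \<inter> i ` (X - f ` Y) = {}"
    using fs_pushout_outside_image(1)[OF po] by auto
  then have "card P = card (j ` Z) + card (i ` (X - f ` Y))"
    unfolding P using fs by (intro card_Un_disjoint) auto
  also have "\<dots> = card Z + card (X - f ` Y)"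
    using fs_pushout_inj_on_right[OF po inj] fs_pushout_outside_image(2)[OF po]
    by (simp add: card_image inj_on_def)
  also have "card (X - f ` Y) = card X - card Y"
    using fs inj by (subst card_Diff_subset) (auto simp: card_image)
  moreover have "card Y \<le> card X"
    using fs inj by (metis card_image card_mono funcset_image)
  ultimately show ?thesis by linarith
qed

lemma fs_pushout_union:
  assumes "finite X" "finite Z"
  shows "fs_pushout X (X \<inter> Z) Z (X \<union> Z) id id id id"
  unfolding fs_pushout_def
proof (intro conjI allI impI ballI)
  fix W :: "nat set" and a b
  assume "finite W" "a \<in> X \<rightarrow> W" "b \<in> Z \<rightarrow> W" "\<forall>y\<in>X \<inter> Z. a (id y) = b (id y)"
  then show "\<exists>u\<in>X \<union> Z \<rightarrow> W. (\<forall>x\<in>X. u (id x) = a x) \<and> (\<forall>z\<in>Z. u (id z) = b z) \<and>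
      (\<forall>u'\<in>X \<union> Z \<rightarrow> W. (\<forall>x\<in>X. u' (id x) = a x) \<and> (\<forall>z\<in>Z. u' (id z) = b z)
         \<longrightarrow> (\<forall>p\<in>X \<union> Z. u' p = u p))"
    by (intro bexI[of _ "\<lambda>p. if p \<in> X then a p else b p"]) auto
qed (use assms in auto)

section \<open>The Grothendieck heap of finite sets\<close>

primrec hterm_card :: "nat set hterm \<Rightarrow> int" where
  "hterm_card (Gen A) = int (card A)"
| "hterm_card (Tri a b c) = hterm_card a - hterm_card b + hterm_card c"

lemma Gen_in_wf_terms [simp]: "Gen A \<in> wf_terms \<longleftrightarrow> finite A"
  by (simp add: wf_terms_def)

lemma Tri_in_wf_terms [simp]:
  "Tri a b c \<in> wf_terms \<longleftrightarrow> a \<in> wf_terms \<and> b \<in> wf_terms \<and> c \<in> wf_terms"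
  by (auto simp: wf_terms_def)

lemma gh_rel_wf_terms: "(a, b) \<in> gh_rel \<Longrightarrow> a \<in> wf_terms \<and> b \<in> wf_terms"
  by (induction rule: gh_rel.induct) (auto dest: fs_pushoutD(1-4))

lemma gh_rel_hterm_card: "(a, b) \<in> gh_rel \<Longrightarrow> hterm_card a = hterm_card b"
proof (induction rule: gh_rel.induct)
  case (iso A B)
  then show ?case by (simp add: fs_iso_imp_card_eq)
next
  case (pushout X Y Z P f g i j)
  from pushout.hyps(2) have "card P + card Y = card X + card Z"
    using fs_pushout_card[OF pushout.hyps(1)] fs_pushout_card[OF fs_pushout_commute[OF pushout.hyps(1)]]
    by (auto dest: fs_mono_imp_inj_on)
  then show ?case by simp
qed simp_all

lemma equiv_gh_rel: "equiv wf_terms gh_rel"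
proof (rule equivI)
  show "gh_rel \<subseteq> wf_terms \<times> wf_terms" using gh_rel_wf_terms by auto
  show "refl_on wf_terms gh_rel" by (auto simp: refl_on_def intro: gh_rel.refl)
  show "sym gh_rel" by (auto intro: symI gh_rel.sym)
  show "trans gh_rel" by (auto intro: transI gh_rel.trans)
qed

abbreviation hclass :: "nat set hterm \<Rightarrow> nat set hterm set" where
  "hclass t \<equiv> gh_rel `` {t}"

lemma hclass_in_K0: "t \<in> wf_terms \<Longrightarrow> hclass t \<in> K0"
  unfolding K0_def by (rule quotientI)

lemma hclass_eqI: "(a, b) \<in> gh_rel \<Longrightarrow> hclass a = hclass b"
  using equiv_gh_rel by (rule equiv_class_eq)

lemma K0_cases:
  assumes "x \<in> K0" obtains t where "x = hclass t" "t \<in> wf_terms"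
  using assms unfolding K0_def by (rule quotientE)

lemma some_in_hclass: "t \<in> wf_terms \<Longrightarrow> (t, SOME a. (t, a) \<in> gh_rel) \<in> gh_rel"
  by (rule someI) (rule gh_rel.refl)

lemma K0_op_hclass:
  "a \<in> wf_terms \<Longrightarrow> b \<in> wf_terms \<Longrightarrow> c \<in> wf_terms \<Longrightarrow>
    K0_op (hclass a) (hclass b) (hclass c) = hclass (Tri a b c)"
  unfolding K0_op_def
  by (rule hclass_eqI, rule gh_rel.sym, rule gh_rel.cong) (simp_all add: some_in_hclass)

lemma heap_K0: "heap K0 K0_op"
  unfolding heap_def
proof (intro conjI ballI)
  fix a b c assume "a \<in> K0" "b \<in> K0" "c \<in> K0"
  then show "K0_op a b c \<in> K0"
    by (elim K0_cases) (simp add: K0_op_hclass hclass_in_K0)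
next
  fix a b c d e assume "a \<in> K0" "b \<in> K0" "c \<in> K0" "d \<in> K0" "e \<in> K0"
  then show "K0_op a b (K0_op c d e) = K0_op (K0_op a b c) d e"
    by (elim K0_cases) (simp add: K0_op_hclass hclass_eqI gh_rel.assoc)
next
  fix x y assume "x \<in> K0" "y \<in> K0"
  then show "K0_op x x y = y" "K0_op y x x = y"
    by (elim K0_cases, simp add: K0_op_hclass hclass_eqI gh_rel.malcev1 gh_rel.malcev2)+
qed

lemma hclass_Gen_eqI:
  assumes "finite A" "finite B" "card A = card B"
  shows "hclass (Gen A) = hclass (Gen B)"
proof -
  obtain h where "bij_betw h A B" using assms by (metis bij_betw_iff_card)
  then show ?thesis using assms by (intro hclass_eqI gh_rel.iso bij_betw_imp_fs_iso)
qed

lemma hclass_Gen_union: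
  "finite X \<Longrightarrow> finite Z \<Longrightarrow>
    K0_op (hclass (Gen X)) (hclass (Gen (X \<inter> Z))) (hclass (Gen Z)) = hclass (Gen (X \<union> Z))"
  by (simp add: K0_op_hclass hclass_eqI gh_rel.pushout[OF fs_pushout_union] fs_mono_def)

definition K0_to_int :: "nat set hterm set \<Rightarrow> int" where
  "K0_to_int x = hterm_card (SOME t. t \<in> x)"

lemma K0_to_int_hclass:
  assumes "t \<in> wf_terms" shows "K0_to_int (hclass t) = hterm_card t"
  using gh_rel_hterm_card[OF some_in_hclass[OF assms]] by (simp add: K0_to_int_def)

lemma K0_to_int_K0_op:
  "x \<in> K0 \<Longrightarrow> y \<in> K0 \<Longrightarrow> z \<in> K0 \<Longrightarrow> K0_to_int (K0_op x y z) = K0_to_int x - K0_to_int y + K0_to_int z"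
  by (elim K0_cases) (simp add: K0_op_hclass K0_to_int_hclass)

section \<open>The cardinality isomorphism\<close>

abbreviation K0_group :: "nat set hterm set monoid" where
  "K0_group \<equiv> heap_retract K0 K0_op (hclass (Gen {}))"

definition int_to_K0 :: "int \<Rightarrow> nat set hterm set" where
  "int_to_K0 n = hclass (Gen {0}) [^]\<^bsub>K0_group\<^esub> n"

lemma group_K0_group: "group K0_group"
  by (rule heap_retract_group[OF heap_K0 hclass_in_K0]) simp

lemma int_to_K0_in_K0: "int_to_K0 n \<in> K0"
  using group.int_pow_closed[OF group_K0_group] hclass_in_K0[of "Gen {0}"]
  by (simp add: int_to_K0_def heap_retract_def)

lemma int_to_K0_K0_op: "int_to_K0 (p - q + r) = K0_op (int_to_K0 p) (int_to_K0 q) (int_to_K0 r)"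
proof -
  have "hclass (Gen {0}) \<in> carrier K0_group"
    by (simp add: hclass_in_K0 heap_retract_def)
  then have "int_to_K0 (p - q + r) =
      int_to_K0 p \<otimes>\<^bsub>K0_group\<^esub> inv\<^bsub>K0_group\<^esub> int_to_K0 q \<otimes>\<^bsub>K0_group\<^esub> int_to_K0 r"
    by (simp only: int_to_K0_def diff_conv_add_uminus
        group.int_pow_mult[OF group_K0_group] group.int_pow_neg[OF group_K0_group])
  also have "\<dots> = K0_op (int_to_K0 p) (int_to_K0 q) (int_to_K0 r)"
    by (rule heap_op_via_retract[OF heap_K0, symmetric]) (simp_all add: hclass_in_K0 int_to_K0_in_K0)
  finally show ?thesis .
qed

lemma int_to_K0_of_nat: "int_to_K0 (int k) = hclass (Gen {0..<k})"
proof (induction k)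
  case 0
  then show ?case by (simp add: int_to_K0_def heap_retract_def)
next
  case (Suc k)
  have "int_to_K0 1 = hclass (Gen {0})"
    using group.int_pow_1[OF group_K0_group] hclass_in_K0[of "Gen {0}"]
    by (simp add: int_to_K0_def heap_retract_def)
  also have "\<dots> = hclass (Gen {k})" by (rule hclass_Gen_eqI) simp_all
  finally have "int_to_K0 (int (Suc k)) = K0_op (hclass (Gen {0..<k})) (hclass (Gen {})) (hclass (Gen {k}))"
    using int_to_K0_K0_op[of "int k" 0 1] Suc.IH by (simp add: add.commute int_to_K0_def heap_retract_def)
  also have "\<dots> = hclass (Gen ({0..<k} \<union> {k}))"
    using hclass_Gen_union[of "{0..<k}" "{k}"] by simp
  finally show ?case by (simp add: atLeast0_lessThan_Suc Un_commute)
qed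

lemma hclass_eq_int_to_K0: "t \<in> wf_terms \<Longrightarrow> hclass t = int_to_K0 (hterm_card t)"
proof (induction t)
  case (Gen A)
  then have "hclass (Gen A) = hclass (Gen {0..<card A})" by (intro hclass_Gen_eqI) simp_all
  then show ?case by (simp add: int_to_K0_of_nat)
next
  case (Tri a b c)
  then show ?case by (simp add: K0_op_hclass[symmetric] int_to_K0_K0_op)
qed

lemma int_to_K0_K0_to_int: "x \<in> K0 \<Longrightarrow> int_to_K0 (K0_to_int x) = x"
  by (elim K0_cases) (metis K0_to_int_hclass hclass_eq_int_to_K0)

lemma K0_to_int_int_to_K0: "K0_to_int (int_to_K0 n) = n"
proof -
  have of_nat: "K0_to_int (int_to_K0 (int k)) = int k" for k
    by (simp add: int_to_K0_of_nat K0_to_int_hclass)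
  show ?thesis
  proof (cases "0 \<le> n")
    case True
    then show ?thesis using of_nat[of "nat n"] by simp
  next
    case False
    then have "K0_to_int (int_to_K0 (- n)) = - n" using of_nat[of "nat (- n)"] by simp
    moreover have "K0_to_int (int_to_K0 0) = 0" using of_nat[of 0] by simp
    ultimately show ?thesis
      using int_to_K0_K0_op[of 0 "- n" 0] by (simp add: K0_to_int_K0_op int_to_K0_in_K0)
  qed
qed

lemma bij_betw_K0_to_int: "bij_betw K0_to_int K0 UNIV"
  by (rule bij_betw_byWitness[where f' = int_to_K0])
    (auto simp: int_to_K0_K0_to_int K0_to_int_int_to_K0 int_to_K0_in_K0)

lemma K0_cl_eq_int_to_K0: "finite A \<Longrightarrow> K0_cl A = int_to_K0 (int (card A))"
  by (simp add: K0_cl_def hclass_eq_int_to_K0)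

section \<open>The product truss\<close>

definition K0_mult :: "nat set hterm set \<Rightarrow> nat set hterm set \<Rightarrow> nat set hterm set" where
  "K0_mult x y = int_to_K0 (K0_to_int x * K0_to_int y)"

lemma truss_K0_mult: "truss K0 K0_op K0_mult"
  unfolding K0_mult_def
  by (rule truss_transfer[OF heap_K0 int_to_K0_in_K0 int_to_K0_K0_to_int K0_to_int_int_to_K0
        int_to_K0_K0_op[symmetric]])

lemma K0_mult_K0_cl:
  assumes "finite A" "finite B" "bij_betw h (A \<times> B) P"
  shows "K0_mult (K0_cl A) (K0_cl B) = K0_cl P"
proof -
  have "finite P" "card P = card A * card B"
    using assms bij_betw_finite bij_betw_same_card card_cartesian_product by fastforce+
  then show ?thesis
    using assms by (simp add: K0_cl_eq_int_to_K0 K0_mult_def K0_to_int_int_to_K0)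
qed

lemma K0_mult_unique:
  assumes tr: "truss K0 K0_op m"
    and cl: "\<forall>A B P. finite A \<and> finite B \<and> (\<exists>h. bij_betw h (A \<times> B) P) \<longrightarrow>
              m (K0_cl A) (K0_cl B) = K0_cl P"
    and "x \<in> K0" "y \<in> K0"
  shows "m x y = K0_mult x y"
proof -
  have "m (int_to_K0 a) (int_to_K0 b) = int_to_K0 (a * b)" for a b
  proof (rule truss_mult_determined_by_nonneg[OF tr int_to_K0_in_K0 int_to_K0_K0_op[symmetric]])
    fix a b :: int assume "0 \<le> a" "0 \<le> b"
    have "\<exists>h. bij_betw h ({0..<nat a} \<times> {0..<nat b}) {0..<nat a * nat b}"
      by (simp add: bij_betw_iff_card card_cartesian_product)
    then have "m (K0_cl {0..<nat a}) (K0_cl {0..<nat b}) = K0_cl {0..<nat a * nat b}"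
      using cl by blast
    then show "m (int_to_K0 a) (int_to_K0 b) = int_to_K0 (a * b)"
      using \<open>0 \<le> a\<close> \<open>0 \<le> b\<close> by (simp add: K0_cl_eq_int_to_K0 nat_mult_distrib)
  qed
  then show ?thesis
    using assms(3,4) int_to_K0_K0_to_int by (metis K0_mult_def)
qed

theorem mainTheorem6:
  shows "\<exists>\<phi>. bij_betw \<phi> K0 (UNIV :: int set) \<and>
     (\<forall>x\<in>K0. \<forall>y\<in>K0. \<forall>z\<in>K0. \<phi> (K0_op x y z) = \<phi> x - \<phi> y + \<phi> z) \<and>
     (\<forall>A. finite A \<longrightarrow> \<phi> (K0_cl A) = int (card A)) \<and>
     (\<exists>m. truss K0 K0_op m \<and>
        (\<forall>A B P. finite A \<and> finite B \<and> (\<exists>h. bij_betw h (A \<times> B) P) \<longrightarrow>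
            m (K0_cl A) (K0_cl B) = K0_cl P) \<and>
        (\<forall>x\<in>K0. \<forall>y\<in>K0. \<phi> (m x y) = \<phi> x * \<phi> y) \<and>
        (\<forall>m'. truss K0 K0_op m' \<and>
           (\<forall>A B P. finite A \<and> finite B \<and> (\<exists>h. bij_betw h (A \<times> B) P) \<longrightarrow>
              m' (K0_cl A) (K0_cl B) = K0_cl P) \<longrightarrow>
           (\<forall>x\<in>K0. \<forall>y\<in>K0. m' x y = m x y)))"
proof (intro exI[of _ K0_to_int] exI[of _ K0_mult] conjI ballI allI impI)
  show "bij_betw K0_to_int K0 UNIV" by (rule bij_betw_K0_to_int)
  show "truss K0 K0_op K0_mult" by (rule truss_K0_mult)
  fix x y z assume "x \<in> K0" "y \<in> K0" "z \<in> K0"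
  then show "K0_to_int (K0_op x y z) = K0_to_int x - K0_to_int y + K0_to_int z"
    by (rule K0_to_int_K0_op)
next
  fix A :: "nat set" assume "finite A"
  then show "K0_to_int (K0_cl A) = int (card A)"
    by (simp add: K0_cl_eq_int_to_K0 K0_to_int_int_to_K0)
next
  fix A B P :: "nat set" assume "finite A \<and> finite B \<and> (\<exists>h. bij_betw h (A \<times> B) P)"
  then show "K0_mult (K0_cl A) (K0_cl B) = K0_cl P" by (elim conjE exE) (rule K0_mult_K0_cl)
next
  fix x y show "K0_to_int (K0_mult x y) = K0_to_int x * K0_to_int y"
    by (simp add: K0_mult_def K0_to_int_int_to_K0)
next
  fix m' x y
  assume "truss K0 K0_op m' \<and> (\<forall>A B P. finite A \<and> finite B \<and> (\<exists>h. bij_betw h (A \<times> B) P) \<longrightarrow>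
      m' (K0_cl A) (K0_cl B) = K0_cl P)" and "x \<in> K0" "y \<in> K0"
  then show "m' x y = K0_mult x y" by (elim conjE) (rule K0_mult_unique)
qed

end
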